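(* Let $\rho$, $\bar\rho$, $\sigma$ be non-negative operators on a finite-dimensional Hilbert space, and suppose $\bar\rho\le\lambda\sigma$ for some $\lambda>0$. Then for every $\epsilon\in(0,\mathrm{tr}(\rho)]$, $$D_H^\epsilon(\rho\|\sigma)\le\log_2(\lambda)-\log_2\bigl(1-\Delta(\rho,\bar\rho)/\epsilon\bigr).$$
   Context: For non-negative operators $\rho,\sigma$ and $\epsilon\in(0,\mathrm{tr}(\rho)]$, the generalised relative entropy is defined by $2^{-D_H^\epsilon(\rho\|\sigma)}=\inf\{\mathrm{tr}(Q\sigma)/\epsilon:\ 0\le Q\le \mathrm{id},\ \mathrm{tr}(Q\rho)\ge\epsilon\}$ (with value $\infty$ if the infimum is $0$). The (generalised) trace distance of non-negative operators is $\Delta(\rho,\sigma)=\frac12\|\rho-\sigma\|_1+\frac12|\mathrm{tr}(\rho-\sigma)|$. *)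

theory Defs
  imports "Jordan_Normal_Form.Schur_Decomposition" "HOL-Library.Extended_Real"
begin

text \<open>Operators on the finite-dimensional Hilbert space C^n are n x n complex matrices.\<close>

definition mtrace :: "complex mat \<Rightarrow> complex" where
  "mtrace A = (\<Sum>i<dim_row A. A $$ (i, i))"

definition psd :: "nat \<Rightarrow> complex mat \<Rightarrow> bool" where
  "psd n A \<longleftrightarrow> A \<in> carrier_mat n n \<and> mat_adjoint A = A \<and>
     (\<forall>v \<in> carrier_vec n. Im (conjugate v \<bullet> (A *\<^sub>v v)) = 0 \<and> Re (conjugate v \<bullet> (A *\<^sub>v v)) \<ge> 0)"

definition loewner_le :: "nat \<Rightarrow> complex mat \<Rightarrow> complex mat \<Rightarrow> bool" where
  "loewner_le n A B \<longleftrightarrow> A \<in> carrier_mat n n \<and> B \<in> carrier_mat n n \<and> psd n (B - A)"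

definition eigvals :: "complex mat \<Rightarrow> complex list" where
  "eigvals A = (SOME as. char_poly A = (\<Prod>a\<leftarrow>as. [:- a, 1:]) \<and> length as = dim_row A)"

text \<open>Trace norm: sum of singular values, i.e. tr sqrt(X^* X).\<close>
definition trace_norm :: "complex mat \<Rightarrow> real" where
  "trace_norm X = (\<Sum>a\<leftarrow>eigvals (mat_adjoint X * X). sqrt (cmod a))"

definition gen_trace_dist :: "complex mat \<Rightarrow> complex mat \<Rightarrow> real" where
  "gen_trace_dist \<rho> \<sigma> = trace_norm (\<rho> - \<sigma>) / 2 + \<bar>Re (mtrace (\<rho> - \<sigma>))\<bar> / 2"

definition hyp_inf :: "nat \<Rightarrow> real \<Rightarrow> complex mat \<Rightarrow> complex mat \<Rightarrow> real" where
  "hyp_inf n eps \<rho> \<sigma> = Inf {Re (mtrace (Q * \<sigma>)) / eps | Q.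
      loewner_le n (0\<^sub>m n n) Q \<and> loewner_le n Q (1\<^sub>m n) \<and> Re (mtrace (Q * \<rho>)) \<ge> eps}"

definition DH :: "nat \<Rightarrow> real \<Rightarrow> complex mat \<Rightarrow> complex mat \<Rightarrow> ereal" where
  "DH n eps \<rho> \<sigma> = (if hyp_inf n eps \<rho> \<sigma> = 0 then \<infinity> else ereal (- log 2 (hyp_inf n eps \<rho> \<sigma>)))"

end

theory Submission
  imports Defs "Berlekamp_Zassenhaus.Mahler_Measure"
begin

text \<open>Every test \<open>0 \<le> Q \<le> 1\<close> with \<open>tr(Q \<rho>) \<ge> \<epsilon>\<close> has
  \<open>tr(Q \<sigma>) / \<epsilon> \<ge> (1 - \<Delta>(\<rho>, \<rho>') / \<epsilon>) / \<lambda>\<close>. Indeed,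
  \<open>tr(Q \<rho>) = tr(Q \<rho>') + tr(Q (\<rho> - \<rho>'))\<close>; the first term is at most
  \<open>\<lambda> tr(Q \<sigma>)\<close> because \<open>\<lambda> \<sigma> - \<rho>'\<close> is non-negative, and the second is at most
  the sum of the positive eigenvalues of the Hermitian \<open>\<rho> - \<rho>'\<close>, which is
  \<open>(\<parallel>\<rho> - \<rho>'\<parallel>\<^sub>1 + tr(\<rho> - \<rho>')) / 2 \<le> \<Delta>(\<rho>, \<rho>')\<close>. Both trace estimates
  are read off in an orthonormal eigenbasis; the spectral theorem for Hermitian matrices is
  obtained by deflation.\<close>

section \<open>Adjoints and traces\<close>

lemma dim_mat_adjoint [simp]:
  "dim_row (mat_adjoint A) = dim_col A" "dim_col (mat_adjoint A) = dim_row A"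
  by (auto simp: mat_adjoint_def)

lemma index_mat_adjoint [simp]:
  fixes A :: "complex mat"
  shows "i < dim_col A \<Longrightarrow> j < dim_row A \<Longrightarrow> mat_adjoint A $$ (i, j) = cnj (A $$ (j, i))"
  by (auto simp: mat_adjoint_def mat_of_rows_def)

lemma mat_adjoint_carrier [simp]: "A \<in> carrier_mat n m \<Longrightarrow> mat_adjoint A \<in> carrier_mat m n"
  by auto

lemma mat_adjoint_mult:
  fixes A B :: "complex mat"
  assumes "A \<in> carrier_mat n m" "B \<in> carrier_mat m p"
  shows "mat_adjoint (A * B) = mat_adjoint B * mat_adjoint A"
  using assms by (intro eq_matI) (auto simp: scalar_prod_def ac_simps)

lemma mat_adjoint_minus:
  fixes A B :: "complex mat"
  shows "A \<in> carrier_mat n m \<Longrightarrow> B \<in> carrier_mat n m \<Longrightarrow>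
    mat_adjoint (A - B) = mat_adjoint A - mat_adjoint B"
  by (intro eq_matI) auto

lemma conjugate_scalar_prod_eq_sum:
  fixes x y :: "complex vec"
  shows "x \<in> carrier_vec n \<Longrightarrow> y \<in> carrier_vec n \<Longrightarrow>
    conjugate x \<bullet> y = (\<Sum>b<n. cnj (x $ b) * y $ b)"
  by (auto simp: scalar_prod_def lessThan_atLeast0)

lemma conjugate_scalar_prod_swap:
  fixes x y :: "complex vec"
  shows "x \<in> carrier_vec n \<Longrightarrow> y \<in> carrier_vec n \<Longrightarrow>
    conjugate x \<bullet> y = cnj (conjugate y \<bullet> x)"
  by (simp add: conjugate_scalar_prod_eq_sum ac_simps)

lemma conjugate_scalar_prod_self_pos:
  fixes w :: "complex vec"
  assumes "w \<in> carrier_vec n" "w \<noteq> 0\<^sub>v n"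
  shows "conjugate w \<bullet> w = of_real (Re (conjugate w \<bullet> w))" "Re (conjugate w \<bullet> w) > 0"
proof -
  have "0 < conjugate w \<bullet> w"
    using conjugate_square_greater_0_vec[OF assms(1)] assms conjugate_vec_sprod_comm[of w n w] by simp
  thus "conjugate w \<bullet> w = of_real (Re (conjugate w \<bullet> w))" "Re (conjugate w \<bullet> w) > 0"
    by (auto simp: less_complex_def complex_eq_iff)
qed

lemma conjugate_scalar_prod_mult_mat_vec:
  fixes A :: "complex mat"
  assumes "A \<in> carrier_mat n m" "x \<in> carrier_vec n" "y \<in> carrier_vec m"
  shows "conjugate x \<bullet> (A *\<^sub>v y) = conjugate (mat_adjoint A *\<^sub>v x) \<bullet> y"
proof -
  have "conjugate x \<bullet> (A *\<^sub>v y) = (\<Sum>i<n. cnj (x$i) * (\<Sum>k<m. A$$(i,k) * y$k))"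
    using assms by (auto simp: scalar_prod_def lessThan_atLeast0)
  also have "\<dots> = (\<Sum>k<m. (\<Sum>i<n. cnj (x$i) * A$$(i,k)) * y$k)"
    by (simp add: sum_distrib_left sum_distrib_right ac_simps) (rule sum.swap)
  also have "\<dots> = conjugate (mat_adjoint A *\<^sub>v x) \<bullet> y"
    using assms by (auto simp: scalar_prod_def lessThan_atLeast0 ac_simps)
  finally show ?thesis .
qed

lemma mult_mat_vec_unit_vec:
  fixes A :: "'a :: comm_ring_1 mat"
  shows "A \<in> carrier_mat n m \<Longrightarrow> j < m \<Longrightarrow> A *\<^sub>v unit_vec m j = col A j"
  by (intro eq_vecI) (auto simp: scalar_prod_def unit_vec_def if_distrib sum.delta cong: if_cong)

lemma mtrace_mult_comm:
  fixes A B :: "complex mat"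
  assumes "A \<in> carrier_mat n m" "B \<in> carrier_mat m n"
  shows "mtrace (A * B) = mtrace (B * A)"
proof -
  have "mtrace (A * B) = (\<Sum>i<n. \<Sum>k<m. A$$(i,k) * B$$(k,i))"
    using assms by (auto simp: mtrace_def scalar_prod_def lessThan_atLeast0)
  also have "\<dots> = (\<Sum>k<m. \<Sum>i<n. B$$(k,i) * A$$(i,k))"
    by (subst sum.swap) (simp add: ac_simps)
  also have "\<dots> = mtrace (B * A)"
    using assms by (auto simp: mtrace_def scalar_prod_def lessThan_atLeast0)
  finally show ?thesis .
qed

lemma mtrace_minus:
  fixes A B :: "complex mat"
  shows "A \<in> carrier_mat n n \<Longrightarrow> B \<in> carrier_mat n n \<Longrightarrow> mtrace (A - B) = mtrace A - mtrace B"
  by (auto simp: mtrace_def sum_subtractf)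

lemma mtrace_smult:
  fixes A :: "complex mat"
  shows "A \<in> carrier_mat n n \<Longrightarrow> mtrace (c \<cdot>\<^sub>m A) = c * mtrace A"
  by (auto simp: mtrace_def sum_distrib_left)

lemma mtrace_square_similar:
  fixes M T :: "complex mat"
  assumes M: "M \<in> carrier_mat n n" and sim: "similar_mat_wit M T P Q"
  shows "mtrace (M * M) = mtrace (T * T)"
proof -
  from similar_mat_witD2[OF M sim]
  have T: "T \<in> carrier_mat n n" and P: "P \<in> carrier_mat n n" and Q: "Q \<in> carrier_mat n n"
    and QP: "Q * P = 1\<^sub>m n" by auto
  have "M ^\<^sub>m Suc (Suc 0) = P * T ^\<^sub>m Suc (Suc 0) * Q" by (rule similar_mat_wit_pow_id[OF sim])
  hence "mtrace (M * M) = mtrace ((P * (T * T)) * Q)" using M T by simp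
  also have "\<dots> = mtrace (Q * (P * (T * T)))" by (rule mtrace_mult_comm) (use P Q T in auto)
  also have "Q * (P * (T * T)) = (Q * P) * (T * T)" by (rule assoc_mult_mat[symmetric]) (use P Q T in auto)
  also have "\<dots> = T * T" using QP T by simp
  finally show ?thesis .
qed

lemma mtrace_square_upper_triangular:
  fixes T :: "complex mat"
  assumes T: "T \<in> carrier_mat n n" and ut: "upper_triangular T"
  shows "mtrace (T * T) = (\<Sum>i<n. (T $$ (i, i))\<^sup>2)"
proof -
  have "(T * T) $$ (i, i) = (T $$ (i, i))\<^sup>2" if i: "i < n" for i
  proof -
    have "(T * T) $$ (i, i) = (\<Sum>k<n. T $$ (i, k) * T $$ (k, i))"
      using T i by (auto simp: scalar_prod_def lessThan_atLeast0)
    also have "\<dots> = (\<Sum>k<n. if k = i then (T $$ (i, i))\<^sup>2 else 0)"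
      using ut T i by (intro sum.cong) (auto simp: upper_triangular_def power2_eq_square neq_iff)
    finally show ?thesis using i by simp
  qed
  thus ?thesis using T by (simp add: mtrace_def)
qed

lemma mtrace_square_hermitian:
  fixes M :: "complex mat"
  assumes M: "M \<in> carrier_mat n n" and herm: "mat_adjoint M = M"
  shows "mtrace (M * M) = of_real (\<Sum>i<n. \<Sum>k<n. (cmod (M $$ (i, k)))\<^sup>2)"
proof -
  have "mtrace (M * M) = (\<Sum>i<n. \<Sum>k<n. M $$ (i, k) * M $$ (k, i))"
    using M by (auto simp: mtrace_def scalar_prod_def lessThan_atLeast0)
  also have "\<dots> = (\<Sum>i<n. \<Sum>k<n. of_real ((cmod (M $$ (i, k)))\<^sup>2))"
  proof (intro sum.cong refl)
    fix i k assume "i \<in> {..<n}" "k \<in> {..<n}"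
    hence "M $$ (k, i) = cnj (M $$ (i, k))"
      using M index_mat_adjoint[of k M i] unfolding herm by simp
    thus "M $$ (i, k) * M $$ (k, i) = of_real ((cmod (M $$ (i, k)))\<^sup>2)"
      using complex_norm_square[of "M $$ (i, k)"] by simp
  qed
  finally show ?thesis by simp
qed

section \<open>Spectral theorem for Hermitian matrices\<close>

text \<open>The trace of \<open>M * M\<close> is the sum of the squared eigenvalues (by a Schur
  decomposition) and also the sum of the squared moduli of the entries.\<close>

lemma hermitian_eq_zero_if_eigenvalues_zero:
  fixes M :: "complex mat"
  assumes M: "M \<in> carrier_mat n n" and herm: "mat_adjoint M = M"
    and ev: "\<And>mu. eigenvalue M mu \<Longrightarrow> mu = 0"
  shows "M = 0\<^sub>m n n"
proof -
  obtain es where cp: "char_poly M = (\<Prod>a\<leftarrow>es. [:- a, 1:])" and len: "length es = n"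
    using char_poly_factorized[OF M] by blast
  obtain T P Q where "schur_decomposition M es = (T, P, Q)"
    by (cases "schur_decomposition M es") auto
  from schur_decomposition[OF M cp this]
  have sim: "similar_mat_wit M T P Q" and ut: "upper_triangular T" and dg: "diag_mat T = es"
    by auto
  have T: "T \<in> carrier_mat n n" using similar_mat_witD2[OF M sim] by auto
  have "T $$ (i, i) = 0" if i: "i < n" for i
  proof -
    have "poly (char_poly M) (es ! i) = 0"
      unfolding cp using i len by (auto simp: poly_prod_list prod_list_zero_iff)
    hence "eigenvalue M (es ! i)" using eigenvalue_root_char_poly[OF M] by auto
    moreover have "T $$ (i, i) = es ! i" using dg[symmetric] i T by (auto simp: diag_mat_def)
    ultimately show ?thesis using ev by auto
  qed
  hence "mtrace (M * M) = 0"
    using mtrace_square_similar[OF M sim] mtrace_square_upper_triangular[OF T ut] by simp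
  hence "complex_of_real (\<Sum>i<n. \<Sum>k<n. (cmod (M $$ (i, k)))\<^sup>2) = 0"
    unfolding mtrace_square_hermitian[OF M herm] .
  hence "(\<Sum>i<n. \<Sum>k<n. (cmod (M $$ (i, k)))\<^sup>2) = 0"
    by (simp only: of_real_eq_0_iff)
  hence "\<forall>i\<in>{..<n}. \<forall>k\<in>{..<n}. (cmod (M $$ (i, k)))\<^sup>2 = 0"
    by (subst (asm) sum_nonneg_eq_0_iff) (auto intro!: sum_nonneg simp: sum_nonneg_eq_0_iff)
  thus ?thesis using M by (intro eq_matI) auto
qed

definition orthonormal :: "nat \<Rightarrow> nat \<Rightarrow> (nat \<Rightarrow> complex vec) \<Rightarrow> bool" where
  "orthonormal n k u \<longleftrightarrow> (\<forall>i<k. u i \<in> carrier_vec n) \<and>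
     (\<forall>i<k. \<forall>j<k. conjugate (u i) \<bullet> u j = (if i = j then 1 else 0))"

lemma orthonormalD:
  assumes "orthonormal n k u"
  shows "i < k \<Longrightarrow> u i \<in> carrier_vec n"
    and "i < k \<Longrightarrow> j < k \<Longrightarrow> conjugate (u i) \<bullet> u j = (if i = j then 1 else 0)"
  using assms by (auto simp: orthonormal_def)

lemma orthonormal_extend:
  assumes ON: "orthonormal n k u" and w: "w \<in> carrier_vec n" and w1: "conjugate w \<bullet> w = 1"
    and orth: "\<And>j. j < k \<Longrightarrow> conjugate (u j) \<bullet> w = 0"
  shows "orthonormal n (Suc k) (u(k := w))"
proof -
  have "conjugate w \<bullet> u j = 0" if "j < k" for j
    using conjugate_scalar_prod_swap[OF w orthonormalD(1)[OF ON that]] orth[OF that] by simp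
  thus ?thesis using ON w w1 orth by (auto simp: orthonormal_def less_Suc_eq)
qed

definition orth_compl_proj :: "nat \<Rightarrow> nat \<Rightarrow> (nat \<Rightarrow> complex vec) \<Rightarrow> complex mat" where
  "orth_compl_proj n k u =
     mat n n (\<lambda>(a, b). (if a = b then 1 else 0) - (\<Sum>i<k. u i $ a * cnj (u i $ b)))"

lemma orth_compl_proj_carrier [simp]: "orth_compl_proj n k u \<in> carrier_mat n n"
  unfolding orth_compl_proj_def by (rule mat_carrier)

lemma dim_orth_compl_proj [simp]:
  "dim_row (orth_compl_proj n k u) = n" "dim_col (orth_compl_proj n k u) = n"
  unfolding orth_compl_proj_def by simp_all

lemma orth_compl_proj_mult_vec_carrier [simp]: "orth_compl_proj n k u *\<^sub>v v \<in> carrier_vec n"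
  by (rule carrier_vecI) simp

lemma orth_compl_proj_hermitian: "mat_adjoint (orth_compl_proj n k u) = orth_compl_proj n k u"
  by (intro eq_matI) (auto simp: orth_compl_proj_def ac_simps)

lemma mtrace_orth_compl_proj:
  assumes ON: "orthonormal n k u"
  shows "mtrace (orth_compl_proj n k u) = of_nat n - of_nat k"
proof -
  have "mtrace (orth_compl_proj n k u) = of_nat n - (\<Sum>i<k. \<Sum>a<n. cnj (u i $ a) * u i $ a)"
    by (simp add: mtrace_def orth_compl_proj_def sum_subtractf ac_simps) (rule sum.swap)
  also have "(\<Sum>i<k. \<Sum>a<n. cnj (u i $ a) * u i $ a) = (\<Sum>i<k. 1)"
    using orthonormalD[OF ON] by (intro sum.cong refl) (simp flip: conjugate_scalar_prod_eq_sum)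
  finally show ?thesis by simp
qed

lemma index_orth_compl_proj_mult_vec:
  assumes ON: "orthonormal n k u" and v: "v \<in> carrier_vec n" and a: "a < n"
  shows "(orth_compl_proj n k u *\<^sub>v v) $ a = v $ a - (\<Sum>i<k. u i $ a * (conjugate (u i) \<bullet> v))"
proof -
  have "(orth_compl_proj n k u *\<^sub>v v) $ a =
      (\<Sum>b<n. ((if a = b then 1 else 0) - (\<Sum>i<k. u i $ a * cnj (u i $ b))) * v $ b)"
    using v a by (auto simp: orth_compl_proj_def scalar_prod_def lessThan_atLeast0)
  also have "\<dots> = (\<Sum>b<n. (if a = b then 1 else 0) * v $ b) - (\<Sum>b<n. \<Sum>i<k. u i $ a * cnj (u i $ b) * v $ b)"
    by (simp add: left_diff_distrib sum_subtractf sum_distrib_right)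
  also have "(\<Sum>b<n. (if a = b then 1 else 0) * v $ b) = (\<Sum>b<n. if a = b then v $ b else 0)"
    by (intro sum.cong) auto
  also have "\<dots> = v $ a" using a by simp
  also have "(\<Sum>b<n. \<Sum>i<k. u i $ a * cnj (u i $ b) * v $ b) = (\<Sum>i<k. u i $ a * (\<Sum>b<n. cnj (u i $ b) * v $ b))"
    by (subst sum.swap) (simp add: sum_distrib_left ac_simps)
  also have "\<dots> = (\<Sum>i<k. u i $ a * (conjugate (u i) \<bullet> v))"
    by (intro sum.cong refl) (simp add: conjugate_scalar_prod_eq_sum[OF orthonormalD(1)[OF ON] v])
  finally show ?thesis .
qed

lemma orth_compl_proj_orthogonal:
  assumes ON: "orthonormal n k u" and v: "v \<in> carrier_vec n" and j: "j < k"
  shows "conjugate (u j) \<bullet> (orth_compl_proj n k u *\<^sub>v v) = 0"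
proof -
  note uj = orthonormalD(1)[OF ON j] and ui = orthonormalD(1)[OF ON]
  have "conjugate (u j) \<bullet> (orth_compl_proj n k u *\<^sub>v v) =
      (\<Sum>a<n. cnj (u j $ a) * (v $ a - (\<Sum>i<k. u i $ a * (conjugate (u i) \<bullet> v))))"
    by (subst conjugate_scalar_prod_eq_sum[OF uj orth_compl_proj_mult_vec_carrier], rule sum.cong[OF refl],
        subst index_orth_compl_proj_mult_vec[OF ON v], auto)
  also have "\<dots> = (\<Sum>a<n. cnj (u j $ a) * v $ a)
      - (\<Sum>i<k. (\<Sum>a<n. cnj (u j $ a) * u i $ a) * (conjugate (u i) \<bullet> v))"
    by (simp add: right_diff_distrib sum_subtractf sum_distrib_left sum_distrib_right ac_simps)
       (rule sum.swap)
  also have "(\<Sum>a<n. cnj (u j $ a) * v $ a) = conjugate (u j) \<bullet> v"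
    by (simp add: conjugate_scalar_prod_eq_sum[OF uj v])
  also have "(\<Sum>i<k. (\<Sum>a<n. cnj (u j $ a) * u i $ a) * (conjugate (u i) \<bullet> v)) =
      (\<Sum>i<k. if j = i then conjugate (u i) \<bullet> v else 0)"
    by (intro sum.cong refl)
      (simp add: orthonormalD(2)[OF ON j] conjugate_scalar_prod_eq_sum[OF uj ui, symmetric])
  finally show ?thesis using j by simp
qed

lemma orth_compl_proj_fixes:
  assumes ON: "orthonormal n k u" and v: "v \<in> carrier_vec n"
    and orth: "\<And>j. j < k \<Longrightarrow> conjugate (u j) \<bullet> v = 0"
  shows "orth_compl_proj n k u *\<^sub>v v = v"
proof (rule eq_vecI)
  fix a assume "a < dim_vec v"
  hence a: "a < n" using v by auto
  show "(orth_compl_proj n k u *\<^sub>v v) $ a = v $ a"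
    by (subst index_orth_compl_proj_mult_vec[OF ON v a]) (simp add: orth)
qed (use v in auto)

lemma orthonormal_orthogonal_vector_exists:
  assumes ON: "orthonormal n k u" and k: "k < n"
  shows "\<exists>w \<in> carrier_vec n. w \<noteq> 0\<^sub>v n \<and> (\<forall>j<k. conjugate (u j) \<bullet> w = 0)"
proof (rule ccontr)
  let ?P = "orth_compl_proj n k u"
  assume none: "\<not> ?thesis"
  have "?P *\<^sub>v unit_vec n a = 0\<^sub>v n" for a
    using none orth_compl_proj_orthogonal[OF ON unit_vec_carrier] orth_compl_proj_mult_vec_carrier by blast
  hence "?P $$ (a, a) = 0" if "a < n" for a
    using that mult_mat_vec_unit_vec[OF orth_compl_proj_carrier that, of k u] by (metis index_col
        index_zero_vec(1) dim_orth_compl_proj)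
  hence "mtrace ?P = 0" by (simp add: mtrace_def)
  thus False using mtrace_orth_compl_proj[OF ON] k by simp
qed

lemma hermitian_eigenvalue_real:
  fixes A :: "complex mat"
  assumes A: "A \<in> carrier_mat n n" and herm: "mat_adjoint A = A" and w: "w \<in> carrier_vec n"
    and w0: "w \<noteq> 0\<^sub>v n" and Aw: "A *\<^sub>v w = mu \<cdot>\<^sub>v w"
  shows "mu = of_real (Re mu)"
proof -
  have "mu * (conjugate w \<bullet> w) = conjugate w \<bullet> (A *\<^sub>v w)" using Aw w by simp
  also have "\<dots> = conjugate (A *\<^sub>v w) \<bullet> w"
    using conjugate_scalar_prod_mult_mat_vec[OF A w w] by (simp add: herm)
  also have "\<dots> = cnj mu * (conjugate w \<bullet> w)" using Aw w by (simp add: conjugate_smult_vec)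
  finally have "mu = cnj mu" using conjugate_scalar_prod_self_pos[OF w w0] by auto
  thus ?thesis by (simp add: complex_eq_iff)
qed

lemma hermitian_preserves_orthogonal:
  fixes A :: "complex mat"
  assumes A: "A \<in> carrier_mat n n" and herm: "mat_adjoint A = A"
    and u: "u \<in> carrier_vec n" and Au: "A *\<^sub>v u = of_real d \<cdot>\<^sub>v u"
    and x: "x \<in> carrier_vec n" and orth: "conjugate u \<bullet> x = 0"
  shows "conjugate u \<bullet> (A *\<^sub>v x) = 0"
proof -
  have "conjugate u \<bullet> (A *\<^sub>v x) = conjugate (A *\<^sub>v u) \<bullet> x"
    using conjugate_scalar_prod_mult_mat_vec[OF A u x] by (simp add: herm)
  thus ?thesis using u x orth by (simp add: Au conjugate_smult_vec)
qed

lemma hermitian_compression: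
  fixes A P :: "complex mat"
  assumes A: "A \<in> carrier_mat n n" and P: "P \<in> carrier_mat n n"
    and "mat_adjoint A = A" "mat_adjoint P = P"
  shows "mat_adjoint (P * A * P) = P * A * P"
proof -
  have PA: "P * A \<in> carrier_mat n n" using P A by auto
  have "mat_adjoint (P * A * P) = mat_adjoint P * mat_adjoint (P * A)"
    by (rule mat_adjoint_mult[OF PA P])
  also have "mat_adjoint (P * A) = mat_adjoint A * mat_adjoint P" by (rule mat_adjoint_mult[OF P A])
  finally show ?thesis using P A assms(3,4) by (simp add: assoc_mult_mat[of _ n n])
qed

lemma orthogonal_if_orth_compl_proj_eq_smult:
  assumes ON: "orthonormal n k u" and y: "y \<in> carrier_vec n" and w: "w \<in> carrier_vec n"
    and eq: "orth_compl_proj n k u *\<^sub>v y = mu \<cdot>\<^sub>v w" and mu: "mu \<noteq> 0" and j: "j < k"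
  shows "conjugate (u j) \<bullet> w = 0"
proof -
  have "mu * (conjugate (u j) \<bullet> w) = conjugate (u j) \<bullet> (mu \<cdot>\<^sub>v w)"
    using w orthonormalD(1)[OF ON j] by simp
  also have "\<dots> = 0" using orth_compl_proj_orthogonal[OF ON y j] by (simp add: eq)
  finally show ?thesis using mu by simp
qed

text \<open>Deflation: with \<open>P\<close> the projection onto the orthogonal complement of eigenvectors
  already found, an eigenvector of the Hermitian \<open>P A P\<close> for a non-zero eigenvalue lies in
  that complement and is an eigenvector of \<open>A\<close>; if \<open>P A P = 0\<close>, every vector of the
  complement is annihilated by \<open>A\<close>.\<close>

lemma hermitian_eigenvector_orthogonal_exists:
  fixes A :: "complex mat"
  assumes A: "A \<in> carrier_mat n n" and herm: "mat_adjoint A = A" and ON: "orthonormal n k u"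
    and eig: "\<And>i. i < k \<Longrightarrow> A *\<^sub>v u i = of_real (d i) \<cdot>\<^sub>v u i" and k: "k < n"
  shows "\<exists>w mu. w \<in> carrier_vec n \<and> w \<noteq> 0\<^sub>v n \<and> (\<forall>j<k. conjugate (u j) \<bullet> w = 0)
    \<and> A *\<^sub>v w = mu \<cdot>\<^sub>v w"
proof -
  let ?P = "orth_compl_proj n k u"
  let ?M = "?P * A * ?P"
  have PA: "?P * A \<in> carrier_mat n n" using A by auto
  have M: "?M \<in> carrier_mat n n" using A by auto
  have M_herm: "mat_adjoint ?M = ?M"
    using A herm by (intro hermitian_compression) (auto simp: orth_compl_proj_hermitian)
  have Mv: "?M *\<^sub>v x = ?P *\<^sub>v (A *\<^sub>v (?P *\<^sub>v x))" if x: "x \<in> carrier_vec n" for x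
  proof -
    have "?M *\<^sub>v x = (?P * A) *\<^sub>v (?P *\<^sub>v x)" using PA x by (intro assoc_mult_mat_vec) auto
    also have "\<dots> = ?P *\<^sub>v (A *\<^sub>v (?P *\<^sub>v x))" using A x by (intro assoc_mult_mat_vec) auto
    finally show ?thesis .
  qed
  have A_eq_M: "A *\<^sub>v x = ?M *\<^sub>v x"
    if x: "x \<in> carrier_vec n" and orth: "\<forall>j<k. conjugate (u j) \<bullet> x = 0" for x
  proof -
    have "conjugate (u j) \<bullet> (A *\<^sub>v x) = 0" if "j < k" for j
      using hermitian_preserves_orthogonal[OF A herm orthonormalD(1)[OF ON that] eig[OF that] x] orth that
      by blast
    hence "?P *\<^sub>v (A *\<^sub>v x) = A *\<^sub>v x" using A x by (intro orth_compl_proj_fixes[OF ON]) auto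
    moreover have "?P *\<^sub>v x = x" using orth by (intro orth_compl_proj_fixes[OF ON x]) auto
    ultimately show ?thesis using Mv[OF x] by simp
  qed
  show ?thesis
  proof (cases "?M = 0\<^sub>m n n")
    case True
    obtain w where w: "w \<in> carrier_vec n" "w \<noteq> 0\<^sub>v n" and orth: "\<forall>j<k. conjugate (u j) \<bullet> w = 0"
      using orthonormal_orthogonal_vector_exists[OF ON k] by blast
    have "A *\<^sub>v w = 0 \<cdot>\<^sub>v w" using A_eq_M[OF w(1) orth] True w by (intro eq_vecI) auto
    thus ?thesis using w orth by blast
  next
    case False
    then obtain mu w where mu0: "mu \<noteq> 0" and "eigenvector ?M w mu"
      using hermitian_eq_zero_if_eigenvalues_zero[OF M M_herm] unfolding eigenvalue_def by blast
    hence w: "w \<in> carrier_vec n" "w \<noteq> 0\<^sub>v n" and Mw: "?M *\<^sub>v w = mu \<cdot>\<^sub>v w"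
      unfolding eigenvector_def using M by auto
    have y: "A *\<^sub>v (?P *\<^sub>v w) \<in> carrier_vec n" using A w(1) by simp
    have "?P *\<^sub>v (A *\<^sub>v (?P *\<^sub>v w)) = mu \<cdot>\<^sub>v w" using Mw Mv[OF w(1)] by simp
    hence orth: "\<forall>j<k. conjugate (u j) \<bullet> w = 0"
      using orthogonal_if_orth_compl_proj_eq_smult[OF ON y w(1) _ mu0] by blast
    thus ?thesis using A_eq_M[OF w(1) orth] Mw w by auto
  qed
qed

lemma hermitian_orthonormal_eigenvectors:
  fixes A :: "complex mat"
  assumes A: "A \<in> carrier_mat n n" and herm: "mat_adjoint A = A"
  shows "k \<le> n \<Longrightarrow> \<exists>u d. orthonormal n k u \<and> (\<forall>i<k. A *\<^sub>v u i = of_real (d i) \<cdot>\<^sub>v u i)"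
proof (induct k)
  case 0
  show ?case by (auto simp: orthonormal_def)
next
  case (Suc k)
  then obtain u d where ON: "orthonormal n k u"
    and eig: "\<And>i. i < k \<Longrightarrow> A *\<^sub>v u i = of_real (d i) \<cdot>\<^sub>v u i"
    by auto
  obtain w mu where w: "w \<in> carrier_vec n" "w \<noteq> 0\<^sub>v n"
    and orth: "\<And>j. j < k \<Longrightarrow> conjugate (u j) \<bullet> w = 0" and Aw: "A *\<^sub>v w = mu \<cdot>\<^sub>v w"
    using hermitian_eigenvector_orthogonal_exists[OF A herm ON eig] Suc(2) by auto
  define r where "r = Re (conjugate w \<bullet> w)"
  have r: "r > 0" "conjugate w \<bullet> w = of_real r"
    using conjugate_scalar_prod_self_pos[OF w] unfolding r_def by auto
  define c where "c = complex_of_real (1 / sqrt r)"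
  define w' where "w' = c \<cdot>\<^sub>v w"
  have w': "w' \<in> carrier_vec n" unfolding w'_def using w by simp
  have "cnj c * c * of_real r = 1" unfolding c_def using r(1) by (simp flip: of_real_mult)
  hence "conjugate w' \<bullet> w' = 1"
    unfolding w'_def conjugate_smult_vec using w r by (simp add: ac_simps)
  moreover have "conjugate (u j) \<bullet> w' = 0" if "j < k" for j
    using orth[OF that] w orthonormalD(1)[OF ON that] by (simp add: w'_def)
  moreover have "A *\<^sub>v w' = of_real (Re mu) \<cdot>\<^sub>v w'"
    unfolding w'_def using mult_mat_vec[OF A w(1), of c] Aw hermitian_eigenvalue_real[OF A herm w Aw]
    by (simp add: smult_smult_assoc mult.commute)
  ultimately have "orthonormal n (Suc k) (u(k := w'))"
    and "\<forall>i<Suc k. A *\<^sub>v (u(k := w')) i = of_real ((d(k := Re mu)) i) \<cdot>\<^sub>v (u(k := w')) i"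
    using orthonormal_extend[OF ON w'] eig by (auto simp: less_Suc_eq)
  thus ?case by blast
qed

lemma hermitian_spectral:
  fixes A :: "complex mat"
  assumes "A \<in> carrier_mat n n" "mat_adjoint A = A"
  obtains u d where "orthonormal n n u" "\<And>i. i < n \<Longrightarrow> A *\<^sub>v u i = of_real (d i) \<cdot>\<^sub>v u i"
  using hermitian_orthonormal_eigenvectors[OF assms, of n] by auto

section \<open>Traces in an orthonormal eigenbasis\<close>

definition mat_of_col_fun :: "nat \<Rightarrow> (nat \<Rightarrow> complex vec) \<Rightarrow> complex mat" where
  "mat_of_col_fun n u = mat n n (\<lambda>(a, i). u i $ a)"

lemma mat_of_col_fun_carrier [simp]: "mat_of_col_fun n u \<in> carrier_mat n n"
  unfolding mat_of_col_fun_def by (rule mat_carrier)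

lemma index_mat_of_col_fun [simp]: "a < n \<Longrightarrow> i < n \<Longrightarrow> mat_of_col_fun n u $$ (a, i) = u i $ a"
  unfolding mat_of_col_fun_def by simp

lemma dim_mat_of_col_fun [simp]:
  "dim_row (mat_of_col_fun n u) = n" "dim_col (mat_of_col_fun n u) = n"
  unfolding mat_of_col_fun_def by simp_all

lemma orthonormal_unitary:
  assumes ON: "orthonormal n n u"
  shows "mat_adjoint (mat_of_col_fun n u) * mat_of_col_fun n u = 1\<^sub>m n"
    "mat_of_col_fun n u * mat_adjoint (mat_of_col_fun n u) = 1\<^sub>m n"
proof -
  let ?U = "mat_of_col_fun n u"
  show UU: "mat_adjoint ?U * ?U = 1\<^sub>m n"
  proof (rule eq_matI)
    fix i j assume "i < dim_row (1\<^sub>m n :: complex mat)" "j < dim_col (1\<^sub>m n :: complex mat)"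
    hence ij: "i < n" "j < n" by auto
    have "(mat_adjoint ?U * ?U) $$ (i, j) = (\<Sum>a<n. cnj (u i $ a) * u j $ a)"
      using ij by (auto simp: scalar_prod_def lessThan_atLeast0 intro!: sum.cong)
    also have "\<dots> = conjugate (u i) \<bullet> u j"
      by (simp add: conjugate_scalar_prod_eq_sum[OF orthonormalD(1)[OF ON ij(1)] orthonormalD(1)[OF ON ij(2)]])
    finally show "(mat_adjoint ?U * ?U) $$ (i, j) = 1\<^sub>m n $$ (i, j)"
      using orthonormalD(2)[OF ON] ij by simp
  qed auto
  show "?U * mat_adjoint ?U = 1\<^sub>m n"
    by (rule mat_mult_left_right_inverse[OF _ _ UU]) auto
qed

lemma eigen_decomposition:
  assumes ON: "orthonormal n n u" and B: "B \<in> carrier_mat n n"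
    and eig: "\<And>i. i < n \<Longrightarrow> B *\<^sub>v u i = e i \<cdot>\<^sub>v u i"
  shows "B = mat_of_col_fun n u * mat_diag n e * mat_adjoint (mat_of_col_fun n u)"
proof -
  let ?U = "mat_of_col_fun n u"
  have BU: "B * ?U = ?U * mat_diag n e"
  proof (rule eq_matI)
    fix a i assume "a < dim_row (?U * mat_diag n e)" "i < dim_col (?U * mat_diag n e)"
    hence ai: "a < n" "i < n" using mat_diag_dim[of n e] by auto
    have "(B * ?U) $$ (a, i) = (B *\<^sub>v u i) $ a"
      using ai B orthonormalD(1)[OF ON ai(2)] by (auto simp: scalar_prod_def intro!: sum.cong)
    thus "(B * ?U) $$ (a, i) = (?U * mat_diag n e) $$ (a, i)"
      using eig[OF ai(2)] ai orthonormalD(1)[OF ON ai(2)] by (simp add: mat_diag_mult_right[of ?U n])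
  qed (use B in \<open>auto simp: mat_diag_def\<close>)
  have "B = B * (?U * mat_adjoint ?U)" using orthonormal_unitary[OF ON] B by simp
  also have "\<dots> = (B * ?U) * mat_adjoint ?U" by (rule assoc_mult_mat[symmetric]) (use B in auto)
  finally show ?thesis unfolding BU .
qed

lemma mtrace_mult_eigenbasis:
  assumes ON: "orthonormal n n u" and X: "X \<in> carrier_mat n n"
    and eig: "\<And>i. i < n \<Longrightarrow> X *\<^sub>v u i = e i \<cdot>\<^sub>v u i" and Q: "Q \<in> carrier_mat n n"
  shows "mtrace (Q * X) = (\<Sum>i<n. e i * (conjugate (u i) \<bullet> (Q *\<^sub>v u i)))"
proof -
  let ?U = "mat_of_col_fun n u"
  let ?V = "mat_adjoint ?U * (Q * ?U)"
  have V: "?V \<in> carrier_mat n n" using Q by auto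
  have QU: "Q * ?U \<in> carrier_mat n n" using Q by (intro mult_carrier_mat) auto
  have UD: "?U * mat_diag n e \<in> carrier_mat n n" by (intro mult_carrier_mat) auto
  have "Q * X = (Q * ?U * mat_diag n e) * mat_adjoint ?U"
    using eigen_decomposition[OF ON X eig] Q QU UD by (simp add: assoc_mult_mat[of _ n n _ n _ n])
  hence "mtrace (Q * X) = mtrace ((Q * ?U * mat_diag n e) * mat_adjoint ?U)" by simp
  also have "\<dots> = mtrace (mat_adjoint ?U * (Q * ?U * mat_diag n e))"
    by (rule mtrace_mult_comm[of _ n n]) (use mult_carrier_mat[OF QU mat_diag_dim] in auto)
  also have "mat_adjoint ?U * (Q * ?U * mat_diag n e) = ?V * mat_diag n e"
    using Q QU by (simp add: assoc_mult_mat[of _ n n _ n _ n])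
  also have "mtrace (?V * mat_diag n e) = (\<Sum>i<n. ?V $$ (i, i) * e i)"
    unfolding mat_diag_mult_right[OF V] by (simp add: mtrace_def)
  also have "\<dots> = (\<Sum>i<n. e i * (conjugate (u i) \<bullet> (Q *\<^sub>v u i)))"
  proof (intro sum.cong refl)
    fix i assume "i \<in> {..<n}"
    hence i: "i < n" by simp
    have "?V $$ (i, i) = (\<Sum>a<n. cnj (u i $ a) * (Q *\<^sub>v u i) $ a)"
      using i Q orthonormalD(1)[OF ON i] by (auto simp: scalar_prod_def lessThan_atLeast0 intro!: sum.cong)
    thus "?V $$ (i, i) * e i = e i * (conjugate (u i) \<bullet> (Q *\<^sub>v u i))"
      using Q orthonormalD(1)[OF ON i] by (simp add: conjugate_scalar_prod_eq_sum[of _ n])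
  qed
  finally show ?thesis .
qed

lemma trace_norm_hermitian:
  fixes A :: "complex mat"
  assumes A: "A \<in> carrier_mat n n" and herm: "mat_adjoint A = A" and ON: "orthonormal n n u"
    and eig: "\<And>i. i < n \<Longrightarrow> A *\<^sub>v u i = of_real (d i) \<cdot>\<^sub>v u i"
  shows "trace_norm A = (\<Sum>i<n. \<bar>d i\<bar>)"
proof -
  define B where "B = mat_adjoint A * A"
  define e where "e i = complex_of_real ((d i)\<^sup>2)" for i
  let ?U = "mat_of_col_fun n u"
  have B: "B \<in> carrier_mat n n" unfolding B_def using A by auto
  have eigB: "B *\<^sub>v u i = e i \<cdot>\<^sub>v u i" if i: "i < n" for i
    using A orthonormalD(1)[OF ON i] eig[OF i] mult_mat_vec[OF A orthonormalD(1)[OF ON i]]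
    by (simp add: B_def herm e_def assoc_mult_mat_vec[of _ n n] smult_smult_assoc power2_eq_square)
  have "similar_mat B (mat_diag n e)"
    using B orthonormal_unitary[OF ON] eigen_decomposition[OF ON B eigB]
    by (intro similar_matI[of _ _ ?U "mat_adjoint ?U" n]) auto
  hence "char_poly B = char_poly (mat_diag n e)" by (rule char_poly_similar)
  also have "\<dots> = (\<Prod>a\<leftarrow>diag_mat (mat_diag n e). [:- a, 1:])"
    by (rule char_poly_upper_triangular[OF mat_diag_dim]) (auto simp: mat_diag_def)
  also have "diag_mat (mat_diag n e) = map e [0..<n]"
    unfolding diag_mat_def mat_diag_def by (intro map_cong) auto
  finally have cp: "char_poly B = (\<Prod>a\<leftarrow>map e [0..<n]. [:- a, 1:])" .
  hence "\<exists>as. char_poly B = (\<Prod>a\<leftarrow>as. [:- a, 1:]) \<and> length as = dim_row B"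
    using B by (intro exI[of _ "map e [0..<n]"]) auto
  hence "char_poly B = (\<Prod>a\<leftarrow>eigvals B. [:- a, 1:])"
    unfolding eigvals_def by (rule someI_ex[THEN conjunct1])
  hence "mset (eigvals B) = mset (map e [0..<n])"
    by (intro reconstruct_poly_monic_defines_mset) (simp only: cp)
  hence "trace_norm A = (\<Sum>a\<leftarrow>map e [0..<n]. sqrt (cmod a))"
    unfolding trace_norm_def B_def[symmetric] sum_mset_sum_list[symmetric] mset_map by simp
  also have "\<dots> = (\<Sum>i<n. \<bar>d i\<bar>)"
    by (simp add: e_def sum_list_sum_nth lessThan_atLeast0 norm_power flip: of_real_power)
  finally show ?thesis .
qed

section \<open>Trace bounds for tests \<open>0 \<le> Q \<le> 1\<close>\<close>

lemma psd_carrier: "psd n A \<Longrightarrow> A \<in> carrier_mat n n"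
  and psd_hermitian: "psd n A \<Longrightarrow> mat_adjoint A = A"
  and psd_quadratic_form_nonneg: "psd n A \<Longrightarrow> v \<in> carrier_vec n \<Longrightarrow> 0 \<le> Re (conjugate v \<bullet> (A *\<^sub>v v))"
  unfolding psd_def by auto

lemma loewner_le_zero_iff_psd: "loewner_le n (0\<^sub>m n n) Q \<longleftrightarrow> psd n Q"
proof -
  have "Q \<in> carrier_mat n n \<Longrightarrow> Q - 0\<^sub>m n n = Q" by (intro eq_matI) auto
  thus ?thesis by (auto simp: loewner_le_def psd_def)
qed

lemma loewner_le_smult_carrier: "loewner_le n A (c \<cdot>\<^sub>m B) \<Longrightarrow> B \<in> carrier_mat n n"
  unfolding loewner_le_def by (metis carrier_matD carrier_matI index_smult_mat(2,3))

lemma loewner_le_zero_one: "loewner_le n (0\<^sub>m n n) (1\<^sub>m n)"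
  and loewner_le_one_one: "loewner_le n (1\<^sub>m n) (1\<^sub>m n)"
proof -
  have "psd n (1\<^sub>m n)"
  proof -
    have "0 \<le> conjugate v \<bullet> v" if "v \<in> carrier_vec n" for v :: "complex vec"
      using conjugate_square_ge_0_vec[of v] conjugate_vec_sprod_comm[OF that that] by simp
    moreover have "mat_adjoint (1\<^sub>m n :: complex mat) = 1\<^sub>m n" by (intro eq_matI) auto
    ultimately show ?thesis by (auto simp: psd_def less_eq_complex_def)
  qed
  moreover have "psd n (1\<^sub>m n - 1\<^sub>m n)"
  proof -
    have zero: "1\<^sub>m n - 1\<^sub>m n = (0\<^sub>m n n :: complex mat)" by (intro eq_matI) auto
    have "0\<^sub>m n n *\<^sub>v v = 0\<^sub>v n" if "v \<in> carrier_vec n" for v :: "complex vec"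
      using that by (intro eq_vecI) (auto simp: scalar_prod_def)
    moreover have "mat_adjoint (0\<^sub>m n n :: complex mat) = 0\<^sub>m n n" by (intro eq_matI) auto
    ultimately show ?thesis unfolding zero psd_def by simp
  qed
  ultimately show "loewner_le n (0\<^sub>m n n) (1\<^sub>m n)" "loewner_le n (1\<^sub>m n) (1\<^sub>m n)"
    by (simp_all add: loewner_le_zero_iff_psd loewner_le_def[of n "1\<^sub>m n"])
qed

lemma Re_mtrace_mult_psd_nonneg:
  fixes P Q :: "complex mat"
  assumes P: "psd n P" and Q: "psd n Q"
  shows "0 \<le> Re (mtrace (Q * P))"
proof -
  obtain u d where ON: "orthonormal n n u" and eig: "\<And>i. i < n \<Longrightarrow> P *\<^sub>v u i = of_real (d i) \<cdot>\<^sub>v u i"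
    using hermitian_spectral[OF psd_carrier[OF P] psd_hermitian[OF P]] by blast
  note ui = orthonormalD(1)[OF ON]
  have u1: "conjugate (u i) \<bullet> u i = 1" if "i < n" for i using orthonormalD(2)[OF ON that that] by simp
  have "0 \<le> d i" if i: "i < n" for i
    using psd_quadratic_form_nonneg[OF P ui[OF i]] eig[OF i] ui[OF i] u1[OF i] by simp
  hence "0 \<le> (\<Sum>i<n. d i * Re (conjugate (u i) \<bullet> (Q *\<^sub>v u i)))"
    using psd_quadratic_form_nonneg[OF Q ui] by (intro sum_nonneg) simp
  thus ?thesis
    using mtrace_mult_eigenbasis[OF ON psd_carrier[OF P] eig psd_carrier[OF Q]] by (simp add: Re_sum)
qed

lemma test_quadratic_form_le_one:
  assumes Q1: "loewner_le n Q (1\<^sub>m n)" and v: "v \<in> carrier_vec n" and v1: "conjugate v \<bullet> v = 1"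
  shows "Re (conjugate v \<bullet> (Q *\<^sub>v v)) \<le> 1"
proof -
  have Q: "Q \<in> carrier_mat n n" and psd: "psd n (1\<^sub>m n - Q)" using Q1 by (auto simp: loewner_le_def)
  have "(1\<^sub>m n - Q) *\<^sub>v v = v - Q *\<^sub>v v"
    using minus_mult_distrib_mat_vec[OF _ Q v, of "1\<^sub>m n"] v by simp
  hence "conjugate v \<bullet> ((1\<^sub>m n - Q) *\<^sub>v v) = 1 - conjugate v \<bullet> (Q *\<^sub>v v)"
    using v Q v1 by (simp add: scalar_prod_minus_distrib[of _ n])
  thus ?thesis using psd_quadratic_form_nonneg[OF psd v] by simp
qed

lemma Re_mtrace_mult_test_le:
  fixes X Q :: "complex mat"
  assumes X: "X \<in> carrier_mat n n" and herm: "mat_adjoint X = X"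
    and Q0: "loewner_le n (0\<^sub>m n n) Q" and Q1: "loewner_le n Q (1\<^sub>m n)"
  shows "Re (mtrace (Q * X)) \<le> (trace_norm X + Re (mtrace X)) / 2"
proof -
  have Q: "Q \<in> carrier_mat n n" using Q1 unfolding loewner_le_def by auto
  obtain u d where ON: "orthonormal n n u" and eig: "\<And>i. i < n \<Longrightarrow> X *\<^sub>v u i = of_real (d i) \<cdot>\<^sub>v u i"
    using hermitian_spectral[OF X herm] by blast
  note ui = orthonormalD(1)[OF ON]
  have u1: "conjugate (u i) \<bullet> u i = 1" if "i < n" for i using orthonormalD(2)[OF ON that that] by simp
  define q where "q i = Re (conjugate (u i) \<bullet> (Q *\<^sub>v u i))" for i
  have q: "0 \<le> q i \<and> q i \<le> 1" if "i < n" for i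
    using psd_quadratic_form_nonneg[of n Q, OF _ ui] test_quadratic_form_le_one[OF Q1 ui u1] Q0 that
    by (simp add: q_def loewner_le_zero_iff_psd)
  have bound: "d i * q i \<le> (\<bar>d i\<bar> + d i) / 2" if i: "i < n" for i
  proof (cases "d i \<ge> 0")
    case True
    thus ?thesis using q[OF i] mult_left_le[of "q i" "d i"] by simp
  next
    case False
    thus ?thesis using q[OF i] mult_nonpos_nonneg[of "d i" "q i"] by simp
  qed
  have "Re (mtrace (Q * X)) = (\<Sum>i<n. d i * q i)"
    using mtrace_mult_eigenbasis[OF ON X eig Q] by (simp add: Re_sum q_def)
  also have "\<dots> \<le> (\<Sum>i<n. (\<bar>d i\<bar> + d i) / 2)" by (intro sum_mono bound) simp
  also have "\<dots> = ((\<Sum>i<n. \<bar>d i\<bar>) + (\<Sum>i<n. d i)) / 2"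
    by (simp add: sum.distrib flip: sum_divide_distrib)
  also have "(\<Sum>i<n. d i) = Re (mtrace X)"
    using mtrace_mult_eigenbasis[OF ON X eig one_carrier_mat] X ui u1 by (simp add: Re_sum)
  finally show ?thesis using trace_norm_hermitian[OF X herm ON eig] by simp
qed

lemma test_lower_bound:
  fixes \<rho> \<rho>' \<sigma> Q :: "complex mat"
  assumes \<rho>: "psd n \<rho>" and \<rho>': "psd n \<rho>'" and dom: "loewner_le n \<rho>' (lam \<cdot>\<^sub>m \<sigma>)"
    and Q0: "loewner_le n (0\<^sub>m n n) Q" and Q1: "loewner_le n Q (1\<^sub>m n)"
  shows "Re (mtrace (Q * \<rho>)) - gen_trace_dist \<rho> \<rho>' \<le> lam * Re (mtrace (Q * \<sigma>))"
proof -
  have Q: "Q \<in> carrier_mat n n" using Q1 by (auto simp: loewner_le_def)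
  have \<sigma>: "\<sigma> \<in> carrier_mat n n" using loewner_le_smult_carrier[OF dom] .
  note carr = psd_carrier[OF \<rho>] psd_carrier[OF \<rho>'] Q \<sigma>
  have "Q * (lam \<cdot>\<^sub>m \<sigma> - \<rho>') = Q * (lam \<cdot>\<^sub>m \<sigma>) - Q * \<rho>'"
    by (rule mult_minus_distrib_mat[of _ n n]) (use carr in auto)
  also have "Q * (lam \<cdot>\<^sub>m \<sigma>) = of_real lam \<cdot>\<^sub>m (Q * \<sigma>)" by (rule mult_smult_distrib[OF Q \<sigma>])
  finally have "mtrace (Q * (lam \<cdot>\<^sub>m \<sigma> - \<rho>')) = of_real lam * mtrace (Q * \<sigma>) - mtrace (Q * \<rho>')"
    using carr by (simp add: mtrace_minus[of _ n] mtrace_smult[of _ n])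
  moreover have "psd n (lam \<cdot>\<^sub>m \<sigma> - \<rho>')" using dom by (simp add: loewner_le_def)
  hence "0 \<le> Re (mtrace (Q * (lam \<cdot>\<^sub>m \<sigma> - \<rho>')))"
    using Q0 by (intro Re_mtrace_mult_psd_nonneg) (simp_all add: loewner_le_zero_iff_psd)
  ultimately have "Re (mtrace (Q * \<rho>')) \<le> lam * Re (mtrace (Q * \<sigma>))" by simp
  moreover have "mtrace (Q * (\<rho> - \<rho>')) = mtrace (Q * \<rho>) - mtrace (Q * \<rho>')"
    using carr by (simp add: mult_minus_distrib_mat[of _ n n] mtrace_minus[of _ n])
  moreover have "Re (mtrace (Q * (\<rho> - \<rho>'))) \<le> gen_trace_dist \<rho> \<rho>'"
  proof -
    have X: "\<rho> - \<rho>' \<in> carrier_mat n n" using carr by (intro minus_carrier_mat)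
    have "mat_adjoint (\<rho> - \<rho>') = \<rho> - \<rho>'"
      using mat_adjoint_minus[of \<rho> n n \<rho>'] carr psd_hermitian[OF \<rho>] psd_hermitian[OF \<rho>'] by simp
    from Re_mtrace_mult_test_le[OF X this Q0 Q1]
    show ?thesis
      unfolding gen_trace_dist_def using abs_ge_self[of "Re (mtrace (\<rho> - \<rho>'))"]
      by (simp add: add_divide_distrib)
  qed
  ultimately show ?thesis by simp
qed

lemma hyp_inf_lower_bound:
  fixes \<rho> \<rho>' \<sigma> :: "complex mat"
  assumes \<rho>: "psd n \<rho>" and \<rho>': "psd n \<rho>'" and dom: "loewner_le n \<rho>' (lam \<cdot>\<^sub>m \<sigma>)"
    and lam: "lam > 0" and eps: "eps > 0" "eps \<le> Re (mtrace \<rho>)"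
  shows "(eps - gen_trace_dist \<rho> \<rho>') / (lam * eps) \<le> hyp_inf n eps \<rho> \<sigma>"
  unfolding hyp_inf_def
proof (rule cInf_greatest)
  have "\<sigma> \<in> carrier_mat n n" using loewner_le_smult_carrier[OF dom] .
  thus "{Re (mtrace (Q * \<sigma>)) / eps | Q. loewner_le n (0\<^sub>m n n) Q \<and> loewner_le n Q (1\<^sub>m n)
      \<and> eps \<le> Re (mtrace (Q * \<rho>))} \<noteq> {}"
    using loewner_le_zero_one loewner_le_one_one psd_carrier[OF \<rho>] eps by fastforce
next
  fix s assume "s \<in> {Re (mtrace (Q * \<sigma>)) / eps | Q. loewner_le n (0\<^sub>m n n) Q
      \<and> loewner_le n Q (1\<^sub>m n) \<and> eps \<le> Re (mtrace (Q * \<rho>))}"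
  then obtain Q where s: "s = Re (mtrace (Q * \<sigma>)) / eps" and Q: "loewner_le n (0\<^sub>m n n) Q"
    "loewner_le n Q (1\<^sub>m n)" and Q\<rho>: "eps \<le> Re (mtrace (Q * \<rho>))"
    by blast
  have "eps - gen_trace_dist \<rho> \<rho>' \<le> lam * Re (mtrace (Q * \<sigma>))"
    using test_lower_bound[OF \<rho> \<rho>' dom Q] Q\<rho> by simp
  hence "(eps - gen_trace_dist \<rho> \<rho>') / lam \<le> Re (mtrace (Q * \<sigma>))"
    using lam by (simp add: divide_le_eq mult.commute)
  hence "(eps - gen_trace_dist \<rho> \<rho>') / lam / eps \<le> s"
    unfolding s using eps by (intro divide_right_mono) auto
  thus "(eps - gen_trace_dist \<rho> \<rho>') / (lam * eps) \<le> s"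
    by (simp only: divide_divide_eq_left)
qed

theorem lemmaA5:
  fixes n :: nat and \<rho> \<rho>' \<sigma> :: "complex mat" and lam eps :: real
  assumes "psd n \<rho>" and "psd n \<rho>'" and "psd n \<sigma>"
    and "lam > 0" and "loewner_le n \<rho>' (lam \<cdot>\<^sub>m \<sigma>)"
    and "eps > 0" and "eps \<le> Re (mtrace \<rho>)"
  shows "DH n eps \<rho> \<sigma> \<le>
    (if gen_trace_dist \<rho> \<rho>' < eps
     then ereal (log 2 lam - log 2 (1 - gen_trace_dist \<rho> \<rho>' / eps))
     else \<infinity>)"
proof (cases "gen_trace_dist \<rho> \<rho>' < eps")
  case True
  define \<Delta> where "\<Delta> = gen_trace_dist \<rho> \<rho>'"
  have pos: "0 < 1 - \<Delta> / eps" using True \<open>eps > 0\<close> by (simp add: \<Delta>_def)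
  have "(1 - \<Delta> / eps) / lam \<le> hyp_inf n eps \<rho> \<sigma>"
    using hyp_inf_lower_bound[OF assms(1,2,5,4,6,7)] \<open>eps > 0\<close> by (simp add: \<Delta>_def field_simps)
  moreover have "0 < (1 - \<Delta> / eps) / lam" using pos \<open>lam > 0\<close> by simp
  ultimately have "log 2 ((1 - \<Delta> / eps) / lam) \<le> log 2 (hyp_inf n eps \<rho> \<sigma>)"
    and "hyp_inf n eps \<rho> \<sigma> \<noteq> 0" by auto
  thus ?thesis using True pos \<open>lam > 0\<close> by (simp add: DH_def \<Delta>_def log_divide)
qed simp

end
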